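(* Let $G$ be the graph representation of a schema category and let $F$ be a set of functional dependencies. Let $G_1$ be the first reduced representation (1RR) of $G$ with respect to $F$, and let $\mathcal{R}=\{R_1,\dots,R_p\}$ be the relational schema obtained from $G_1$ by the relational mapping procedure described in the context. Then each relation schema $R_i\in\mathcal{R}$ is in Boyce–Codd normal form (with respect to the functional dependencies implied by the category and $F$).
   Context: Graph representation of a category: a finite directed graph $G$ whose nodes are objects (sets) of three kinds—entity objects, relationship objects and attribute objects—and whose arrows $X\to Y$ are functions, each read as a functional dependency (FD) $X\to Y$. Each relationship object $O$ has a set $\pi(O)$ of projection objects, with a projection arrow $O\to A$ for each $A\in\pi(O)$. The category is thin (at most one arrow between any two objects), so all diagrams commute. Relevant closure $(G,F)^+$: let $FD(G)$ consist of the FD $X\to Y$ for each arrow of $G$ together with, for each relationship object $X$ with projection objects $A_1,\dots,A_n$, the FDs $X\to A_1\cdots A_n$ and $A_1\cdots A_n\to X$; let $D=FD(G)\cup F$. For each left-hand side $X$ of an FD in $D$: if $X$ is not a node of $G$, add it as a node (a composite left-hand side becoming a new node with projection arrows to its components); compute the attribute closure $X^+$ from $D$ using Armstrong's axioms (reflexivity/projection, augmentation, transitivity/composition); for every node $Y$ of $G$ with $Y\in X^+$, add an arrow $X\to Y$ if none exists. A graph $G$ covers $G'$ (w.r.t. $F$) if every arrow of $G'$ is an arrow of $(G,F)^+$; $G$ and $G'$ are equivalent if each covers the other. First reduced representation (1RR): compute $(G,F)^+$; then for each arrow $f$ in turn, remove $f$ if the graph with $f$ deleted is equivalent to the current graph;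 return the resulting graph. Relational mapping: for a node $O$ let $\lambda(O)$ be its name, $outNbr(O)$ the set of nodes $N$ with an arrow $O\to N$, and $bin(O)$ the set of nodes $N$ with arrows both $O\to N$ and $N\to O$. For each not-yet-processed node $O$ having at least one outgoing arrow, create a relation $R$ whose attribute set $sort(R)$ is initially $\{SK\}$ (a surrogate key) if $O$ is an entity or relationship object and $\{\lambda(O)\}$ otherwise; then apply AddNeighbours$(R,O)$: for each $N\in outNbr(O)$, add $\lambda(N)$ to $sort(R)$ (as a foreign key referencing the surrogate key of the relation of $N$ if $N$ is an entity or relationship object), and if $N\in bin(O)$, recursively apply AddNeighbours$(R,N)$ and mark $N$ processed; mark $O$ processed. Finally (cleaning), remove from each relation any surrogate key not referenced by another relation, and remove any relation $R_i$ with $sort(R_i)\subseteq sort(R_j)$ for another relation $R_j$. A relation schema $R$ is in Boyce–Codd normal form (BCNF) if for every nontrivial FD $A\to B$ holding on $R$, $A$ is a superkey of $R$. *)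

theory Defs
  imports Main
begin

text \<open>Nodes: base objects of the original graph (identifiers of type 'a) and
  composite nodes (a set of base objects) created for composite left-hand sides.\<close>
datatype 'a node = Base 'a | Comp "'a set"

datatype kind = Entity | Relationship | Attribute

text \<open>A graph is a pair (node set, arrow set); thin: at most one arrow X \<rightarrow> Y.
  The kind of base objects is given by kd, projection objects of relationship
  objects by pr.  Composite nodes behave like relationship objects w.r.t. FDs
  (projection arrows/FDs to their components) but are neither entity nor
  relationship objects for the relational mapping.\<close>
type_synonym 'a graph = "'a node set \<times> ('a node \<times> 'a node) set"
type_synonym 'a fd = "'a node set \<times> 'a node set"

definition has_projs :: "('a \<Rightarrow> kind) \<Rightarrow> 'a node \<Rightarrow> bool" where
  "has_projs kd N = (case N of Base a \<Rightarrow> kd a = Relationship | Comp S \<Rightarrow> True)"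

definition projs :: "('a \<Rightarrow> 'a set) \<Rightarrow> 'a node \<Rightarrow> 'a node set" where
  "projs pr N = (case N of Base a \<Rightarrow> Base ` pr a | Comp S \<Rightarrow> Base ` S)"

definition is_ent_rel :: "('a \<Rightarrow> kind) \<Rightarrow> 'a node \<Rightarrow> bool" where
  "is_ent_rel kd N = (case N of Base a \<Rightarrow> kd a \<noteq> Attribute | Comp S \<Rightarrow> False)"

text \<open>Attribute closure X^+ of X w.r.t. a set D of FDs (L, R) meaning L \<rightarrow> R;
  this is the closure under Armstrong's axioms.\<close>
inductive_set fd_cl :: "('v set \<times> 'v set) set \<Rightarrow> 'v set \<Rightarrow> 'v set" for D X
  where
    fd_cl_base: "x \<in> X \<Longrightarrow> x \<in> fd_cl D X"
  | fd_cl_step: "(L, R) \<in> D \<Longrightarrow> \<forall>l\<in>L. l \<in> fd_cl D X \<Longrightarrow> y \<in> R \<Longrightarrow> y \<in> fd_cl D X"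

definition FDG :: "('a \<Rightarrow> kind) \<Rightarrow> ('a \<Rightarrow> 'a set) \<Rightarrow> 'a graph \<Rightarrow> 'a fd set" where
  "FDG kd pr G =
     {({x}, {y}) | x y. (x, y) \<in> snd G}
     \<union> {({X}, projs pr X) | X. X \<in> fst G \<and> has_projs kd X}
     \<union> {(projs pr X, {X}) | X. X \<in> fst G \<and> has_projs kd X}"

definition lhs_node :: "'a node set \<Rightarrow> 'a node" where
  "lhs_node L = (if is_singleton L then the_elem L else Comp {a. Base a \<in> L})"

text \<open>Relevant closure (G,F)^+.  New (composite) nodes get projection FDs to their
  components; a node Y is in X^+ if it is derivable from X.\<close>
definition gclosure :: "('a \<Rightarrow> kind) \<Rightarrow> ('a \<Rightarrow> 'a set) \<Rightarrow> 'a fd set \<Rightarrow> 'a graph \<Rightarrow> 'a graph" where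
  "gclosure kd pr F G =
     (let D = FDG kd pr G \<union> F;
          V' = fst G \<union> lhs_node ` fst ` D;
          D' = FDG kd pr (V', snd G) \<union> F
      in (V', snd G \<union> {(lhs_node L, Y) | L Y. L \<in> fst ` D \<and> Y \<in> V' \<and> Y \<in> fd_cl D' L}))"

definition covers :: "('a \<Rightarrow> kind) \<Rightarrow> ('a \<Rightarrow> 'a set) \<Rightarrow> 'a fd set \<Rightarrow> 'a graph \<Rightarrow> 'a graph \<Rightarrow> bool" where
  "covers kd pr F G G' = (snd G' \<subseteq> snd (gclosure kd pr F G))"

definition gequiv :: "('a \<Rightarrow> kind) \<Rightarrow> ('a \<Rightarrow> 'a set) \<Rightarrow> 'a fd set \<Rightarrow> 'a graph \<Rightarrow> 'a graph \<Rightarrow> bool" where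
  "gequiv kd pr F G G' = (covers kd pr F G G' \<and> covers kd pr F G' G)"

definition rr_step :: "('a \<Rightarrow> kind) \<Rightarrow> ('a \<Rightarrow> 'a set) \<Rightarrow> 'a fd set
    \<Rightarrow> 'a graph \<Rightarrow> ('a node \<times> 'a node) \<Rightarrow> 'a graph" where
  "rr_step kd pr F H f =
     (let H' = (fst H, snd H - {f}) in if gequiv kd pr F H' H then H' else H)"

definition first_rr :: "('a \<Rightarrow> kind) \<Rightarrow> ('a \<Rightarrow> 'a set) \<Rightarrow> 'a fd set
    \<Rightarrow> 'a graph \<Rightarrow> ('a node \<times> 'a node) list \<Rightarrow> 'a graph" where
  "first_rr kd pr F G es = foldl (rr_step kd pr F) (gclosure kd pr F G) es"

definition outNbr :: "('a node \<times> 'a node) set \<Rightarrow> 'a node \<Rightarrow> 'a node set" where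
  "outNbr E Ob = {N. (Ob, N) \<in> E}"

definition bin :: "('a node \<times> 'a node) set \<Rightarrow> 'a node \<Rightarrow> 'a node set" where
  "bin E Ob = {N. (Ob, N) \<in> E \<and> (N, Ob) \<in> E}"

text \<open>Nodes visited by the recursive AddNeighbours(R,O).\<close>
inductive_set reach :: "('a node \<times> 'a node) set \<Rightarrow> 'a node \<Rightarrow> 'a node set" for E Ob
  where
    reach_self: "Ob \<in> reach E Ob"
  | reach_bin: "M \<in> reach E Ob \<Longrightarrow> N \<in> bin E M \<Longrightarrow> N \<in> reach E Ob"

text \<open>Relation attributes: SK O is the surrogate key of the relation created from O,
  Nm N is the attribute named lambda(N) (a foreign key if N is an entity/relationship).\<close>
datatype 'a attr = SK "'a node" | Nm "'a node"

definition rel_sort :: "('a \<Rightarrow> kind) \<Rightarrow> ('a node \<times> 'a node) set \<Rightarrow> 'a node \<Rightarrow> 'a attr set" where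
  "rel_sort kd E Ob =
     (if is_ent_rel kd Ob then {SK Ob} else {Nm Ob}) \<union> Nm ` (\<Union>M\<in>reach E Ob. outNbr E M)"

text \<open>A relation before cleaning: (start node, nodes processed by it, attribute set).\<close>
fun map_rels :: "('a \<Rightarrow> kind) \<Rightarrow> ('a node \<times> 'a node) set \<Rightarrow> 'a node list \<Rightarrow> 'a node set
    \<Rightarrow> ('a node \<times> 'a node set \<times> 'a attr set) list" where
  "map_rels kd E [] P = []"
| "map_rels kd E (Ob # os) P =
     (if Ob \<notin> P \<and> outNbr E Ob \<noteq> {}
      then (Ob, reach E Ob, rel_sort kd E Ob) # map_rels kd E os (P \<union> reach E Ob)
      else map_rels kd E os P)"

text \<open>Cleaning: drop unreferenced surrogate keys, then drop relations whose sort is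
  contained in the sort of another relation (of two equal sorts one is kept).\<close>
definition sk_referenced :: "('a \<Rightarrow> kind) \<Rightarrow> ('a node \<times> 'a node set \<times> 'a attr set) list \<Rightarrow> nat \<Rightarrow> bool" where
  "sk_referenced kd rs i = (\<exists>j<length rs. j \<noteq> i \<and>
      (\<exists>N. Nm N \<in> snd (snd (rs ! j)) \<and> is_ent_rel kd N \<and> N \<in> fst (snd (rs ! i))))"

definition clean1 :: "('a \<Rightarrow> kind) \<Rightarrow> ('a node \<times> 'a node set \<times> 'a attr set) list \<Rightarrow> 'a attr set list" where
  "clean1 kd rs = map (\<lambda>i. if sk_referenced kd rs i then snd (snd (rs ! i))
                          else snd (snd (rs ! i)) - {SK (fst (rs ! i))}) [0..<length rs]"

definition clean2 :: "'a attr set list \<Rightarrow> 'a attr set list" where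
  "clean2 ss = map (\<lambda>i. ss ! i)
     (filter (\<lambda>i. \<not> (\<exists>j<length ss. j \<noteq> i \<and> (ss ! i \<subset> ss ! j \<or> (ss ! i = ss ! j \<and> j < i))))
        [0..<length ss])"

definition rel_schema :: "('a \<Rightarrow> kind) \<Rightarrow> 'a graph \<Rightarrow> 'a node list \<Rightarrow> 'a attr set list" where
  "rel_schema kd G ord = clean2 (clean1 kd (map_rels kd (snd G) ord {}))"

text \<open>The node an attribute stands for: SK O denotes (the tuple identifier of) O.\<close>
fun attr_node :: "'a attr \<Rightarrow> 'a node" where
  "attr_node (SK Ob) = Ob"
| "attr_node (Nm N) = N"

definition fd_holds :: "'a fd set \<Rightarrow> 'a attr set \<Rightarrow> 'a attr set \<Rightarrow> bool" where
  "fd_holds D A B = (attr_node ` B \<subseteq> fd_cl D (attr_node ` A))"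

definition bcnf :: "'a fd set \<Rightarrow> 'a attr set \<Rightarrow> bool" where
  "bcnf D R = (\<forall>A B. A \<subseteq> R \<longrightarrow> B \<subseteq> R \<longrightarrow> \<not> B \<subseteq> A \<longrightarrow> fd_holds D A B \<longrightarrow> fd_holds D A R)"

end

theory Submission
  imports Defs
begin

text \<open>
  Let \<open>O\<close> be the node from which a relation \<open>R\<close> is built. Every attribute of \<open>R\<close> is
  reached from \<open>O\<close> along arrows, and AddNeighbours only recurses along arrows present in
  both directions, so the visited nodes are all FD-equivalent to \<open>O\<close>; hence \<open>O\<close> is a key
  of \<open>R\<close>, and BCNF amounts to: whenever \<open>A \<rightarrow> b\<close> holds in \<open>R\<close> with \<open>b \<notin> A\<close>, the
  attributes \<open>A\<close> determine \<open>O\<close>. If they did not, take the arrow \<open>M \<rightarrow> b\<close> (\<open>M\<close> visited)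
  that put \<open>b\<close> into \<open>R\<close>. A derivation of \<open>b\<close> from \<open>A\<close> cannot use it, since \<open>M\<close>
  determines \<open>O\<close> and so is not derivable from \<open>A\<close>; and \<open>M\<close> determines \<open>A\<close> without it.
  So \<open>b\<close> is derivable from \<open>M\<close> in the graph without \<open>M \<rightarrow> b\<close>, whose closure therefore
  restores that arrow. This contradicts the 1RR, which keeps an arrow only if no such
  derivation exists.
\<close>

abbreviation graph_fds :: "('a \<Rightarrow> kind) \<Rightarrow> ('a \<Rightarrow> 'a set) \<Rightarrow> 'a fd set \<Rightarrow> 'a graph \<Rightarrow> 'a fd set" where
  "graph_fds kd pr F G \<equiv> FDG kd pr G \<union> F"

definition reduced :: "('a \<Rightarrow> kind) \<Rightarrow> ('a \<Rightarrow> 'a set) \<Rightarrow> 'a fd set \<Rightarrow> 'a graph \<Rightarrow> bool" where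
  "reduced kd pr F G \<longleftrightarrow> (\<forall>f\<in>snd G. f \<notin> snd (gclosure kd pr F (fst G, snd G - {f})))"

definition rel_nodes :: "('a node \<times> 'a node) set \<Rightarrow> 'a node \<Rightarrow> 'a node set" where
  "rel_nodes E Ob = insert Ob (\<Union> (outNbr E ` reach E Ob))"

lemma fd_cl_mono: "D \<subseteq> D' \<Longrightarrow> fd_cl D X \<subseteq> fd_cl D' X"
proof
  fix x assume "x \<in> fd_cl D X" and "D \<subseteq> D'"
  then show "x \<in> fd_cl D' X"
    by (induction rule: fd_cl.induct) (auto intro: fd_cl.intros)
qed

lemma fd_cl_superset: "X \<subseteq> fd_cl D X"
  by (auto intro: fd_cl_base)

lemma fd_cl_trans: "Y \<subseteq> fd_cl D X \<Longrightarrow> fd_cl D Y \<subseteq> fd_cl D X"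
proof
  fix y assume "y \<in> fd_cl D Y" and "Y \<subseteq> fd_cl D X"
  then show "y \<in> fd_cl D X"
    by (induction rule: fd_cl.induct) (auto intro: fd_cl_step)
qed

lemma fd_cl_singleton_fd: "({x}, {y}) \<in> D \<Longrightarrow> x \<in> fd_cl D X \<Longrightarrow> y \<in> fd_cl D X"
  by (rule fd_cl_step) auto

lemma fd_cl_empty:
  assumes "\<forall>(L, R)\<in>D. L \<noteq> {}"
  shows "fd_cl D {} = {}"
proof -
  have False if "x \<in> fd_cl D {}" for x
    using that
  proof (induction rule: fd_cl.induct)
    case (fd_cl_step L R y)
    then obtain l where "l \<in> L" using assms by fast
    then show False using fd_cl_step.IH by blast
  qed simp
  then show ?thesis by blast
qed

lemma fd_cl_remove_fd:
  assumes "\<not> L \<subseteq> fd_cl D X"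
  shows "fd_cl D X \<subseteq> fd_cl (D - {(L, R)}) X"
proof
  fix y assume "y \<in> fd_cl D X"
  then show "y \<in> fd_cl (D - {(L, R)}) X"
  proof (induction rule: fd_cl.induct)
    case (fd_cl_step L' R' y)
    have "L' \<subseteq> fd_cl D X" using fd_cl_step.IH by blast
    with assms have "(L', R') \<in> D - {(L, R)}" using fd_cl_step.hyps(1) by blast
    with fd_cl_step show ?case by (auto intro: fd_cl.fd_cl_step)
  qed (rule fd_cl_base)
qed

lemma FDG_arrow: "(x, y) \<in> E \<Longrightarrow> ({x}, {y}) \<in> FDG kd pr (V, E)"
  by (auto simp: FDG_def)

lemma FDG_mono: "V \<subseteq> V' \<Longrightarrow> E \<subseteq> E' \<Longrightarrow> FDG kd pr (V, E) \<subseteq> FDG kd pr (V', E')"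
  unfolding FDG_def by auto

lemma FDG_remove_arrow: "FDG kd pr (V, E) \<subseteq> insert ({x}, {y}) (FDG kd pr (V, E - {(x, y)}))"
  unfolding FDG_def by auto

lemma graph_fds_arrow:
  "(x, y) \<in> E \<Longrightarrow> x \<in> fd_cl (graph_fds kd pr F (V, E)) X \<Longrightarrow> y \<in> fd_cl (graph_fds kd pr F (V, E)) X"
  by (rule fd_cl_singleton_fd) (auto dest: FDG_arrow)

lemma lhs_node_singleton [simp]: "lhs_node {x} = x"
  unfolding lhs_node_def by simp

lemma gclosure_nodes: "fst (gclosure kd pr F G) = fst G \<union> lhs_node ` fst ` graph_fds kd pr F G"
  unfolding gclosure_def Let_def by simp

lemma gclosure_arrows_superset: "snd G \<subseteq> snd (gclosure kd pr F G)"
  unfolding gclosure_def Let_def by auto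

lemma gclosure_arrows_closed:
  "snd G \<subseteq> fst G \<times> fst G \<Longrightarrow>
   snd (gclosure kd pr F G) \<subseteq> fst (gclosure kd pr F G) \<times> fst (gclosure kd pr F G)"
  unfolding gclosure_def Let_def by auto

lemma gclosure_arrows:
  "snd (gclosure kd pr F G) = snd G \<union>
     {(lhs_node L, Y) | L Y. L \<in> fst ` graph_fds kd pr F G \<and> Y \<in> fst (gclosure kd pr F G) \<and>
        Y \<in> fd_cl (graph_fds kd pr F (fst (gclosure kd pr F G), snd G)) L}"
  unfolding gclosure_def Let_def by simp

lemma gclosure_mono:
  assumes "E \<subseteq> E'"
  shows "snd (gclosure kd pr F (V, E)) \<subseteq> snd (gclosure kd pr F (V, E'))"
proof -
  let ?V1 = "fst (gclosure kd pr F (V, E))" and ?V2 = "fst (gclosure kd pr F (V, E'))"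
  have D: "graph_fds kd pr F (V, E) \<subseteq> graph_fds kd pr F (V, E')"
    using FDG_mono[OF subset_refl assms] by blast
  then have V: "?V1 \<subseteq> ?V2"
    unfolding gclosure_nodes by auto
  then have "graph_fds kd pr F (?V1, E) \<subseteq> graph_fds kd pr F (?V2, E')"
    using FDG_mono[OF _ assms] by blast
  then have cl: "fd_cl (graph_fds kd pr F (?V1, E)) L \<subseteq> fd_cl (graph_fds kd pr F (?V2, E')) L" for L
    by (rule fd_cl_mono)
  show ?thesis
  proof
    fix p assume "p \<in> snd (gclosure kd pr F (V, E))"
    then consider "p \<in> E"
      | L Y where "p = (lhs_node L, Y)" "L \<in> fst ` graph_fds kd pr F (V, E)"
          "Y \<in> ?V1" "Y \<in> fd_cl (graph_fds kd pr F (?V1, E)) L"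
      unfolding gclosure_arrows[of _ _ _ "(V, E)"] by auto
    then show "p \<in> snd (gclosure kd pr F (V, E'))"
    proof cases
      case 1
      then show ?thesis using assms gclosure_arrows_superset[of "(V, E')" kd pr F] by auto
    next
      case (2 L Y)
      with D V cl have "p \<in> {(lhs_node L, Y) | L Y. L \<in> fst ` graph_fds kd pr F (V, E') \<and> Y \<in> ?V2 \<and>
          Y \<in> fd_cl (graph_fds kd pr F (?V2, E')) L}"
        by blast
      then show ?thesis unfolding gclosure_arrows[of _ _ _ "(V, E')"] by simp
    qed
  qed
qed

text \<open>Only left-hand sides of FDs receive new arrows; the arrow \<open>M \<rightarrow> N\<close> makes \<open>{M}\<close> one.\<close>

lemma gclosure_derived_arrow:
  assumes "(M, N) \<in> E" and "b \<in> V" and "b \<in> fd_cl (graph_fds kd pr F (V, E)) {M}"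
  shows "(M, b) \<in> snd (gclosure kd pr F (V, E))"
proof -
  let ?V' = "fst (gclosure kd pr F (V, E))"
  have "{M} \<in> fst ` graph_fds kd pr F (V, E)"
    using FDG_arrow[OF assms(1)] by force
  moreover have "b \<in> ?V'"
    using assms(2) unfolding gclosure_nodes by simp
  moreover have "graph_fds kd pr F (V, E) \<subseteq> graph_fds kd pr F (?V', E)"
    using FDG_mono[of V ?V' E E kd pr] unfolding gclosure_nodes by auto
  then have "b \<in> fd_cl (graph_fds kd pr F (?V', E)) {M}"
    using assms(3) fd_cl_mono by blast
  ultimately show ?thesis
    unfolding gclosure_arrows[of _ _ _ "(V, E)"]
    by (intro UnI2 CollectI exI[of _ "{M}"] exI[of _ b] conjI) simp_all
qed

lemma rr_step_cases: "rr_step kd pr F H f = H \<or> rr_step kd pr F H f = (fst H, snd H - {f})"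
  unfolding rr_step_def Let_def by auto

lemma rr_step_subgraph:
  "fst (rr_step kd pr F H f) = fst H" "snd (rr_step kd pr F H f) \<subseteq> snd H"
  using rr_step_cases[of kd pr F H f] by auto

lemma rr_step_kept:
  assumes "f \<in> snd (rr_step kd pr F H f)"
  shows "rr_step kd pr F H f = H" and "f \<notin> snd (gclosure kd pr F (fst H, snd H - {f}))"
proof -
  show "rr_step kd pr F H f = H"
    using rr_step_cases[of kd pr F H f] assms by auto
  show "f \<notin> snd (gclosure kd pr F (fst H, snd H - {f}))"
  proof
    assume "f \<in> snd (gclosure kd pr F (fst H, snd H - {f}))"
    then have "gequiv kd pr F (fst H, snd H - {f}) H"
      unfolding gequiv_def covers_def
      using gclosure_arrows_superset[of "(fst H, snd H - {f})" kd pr F] gclosure_arrows_superset[of H kd pr F]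
      by auto
    then have "rr_step kd pr F H f = (fst H, snd H - {f})"
      unfolding rr_step_def Let_def by simp
    then show False using assms by simp
  qed
qed

lemma foldl_rr_step_nodes: "fst (foldl (rr_step kd pr F) H xs) = fst H"
  by (induction xs arbitrary: H) (simp_all add: rr_step_subgraph(1))

lemma foldl_rr_step_arrows: "snd (foldl (rr_step kd pr F) H xs) \<subseteq> snd H"
proof (induction xs arbitrary: H)
  case (Cons x xs)
  have "snd (foldl (rr_step kd pr F) (rr_step kd pr F H x) xs) \<subseteq> snd H"
    using Cons.IH rr_step_subgraph(2) by (rule order_trans)
  then show ?case by simp
qed simp

lemma foldl_rr_step_reduced:
  assumes "f \<in> set xs" and "f \<in> snd (foldl (rr_step kd pr F) H xs)"
  shows "f \<notin> snd (gclosure kd pr F (fst H, snd (foldl (rr_step kd pr F) H xs) - {f}))"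
  using assms
proof (induction xs arbitrary: H)
  case (Cons x xs)
  let ?H1 = "rr_step kd pr F H x"
  let ?R = "foldl (rr_step kd pr F) ?H1 xs"
  show ?case
  proof (cases "f \<in> set xs")
    case True
    then show ?thesis using Cons.IH[of ?H1] Cons.prems(2) rr_step_subgraph(1)[of kd pr F H x] by simp
  next
    case False
    with Cons.prems have "f = x" and "f \<in> snd ?R" by simp_all
    then have "x \<in> snd ?H1" using foldl_rr_step_arrows by blast
    then have kept: "?H1 = H" and x: "x \<notin> snd (gclosure kd pr F (fst H, snd H - {x}))"
      by (rule rr_step_kept)+
    have "snd ?R \<subseteq> snd H"
      using foldl_rr_step_arrows[of kd pr F ?H1 xs] kept by simp
    then have "snd (gclosure kd pr F (fst H, snd ?R - {x})) \<subseteq> snd (gclosure kd pr F (fst H, snd H - {x}))"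
      by (intro gclosure_mono Diff_mono) auto
    with x have "x \<notin> snd (gclosure kd pr F (fst H, snd ?R - {x}))"
      by (rule contra_subsetD[rotated])
    then show ?thesis
      using \<open>f = x\<close> by (simp only: foldl_Cons not_False_eq_True)
  qed
qed simp

lemma first_rr_subgraph:
  "fst (first_rr kd pr F G es) = fst (gclosure kd pr F G)"
  "snd (first_rr kd pr F G es) \<subseteq> snd (gclosure kd pr F G)"
  unfolding first_rr_def by (rule foldl_rr_step_nodes foldl_rr_step_arrows)+

lemma first_rr_reduced:
  assumes "set es = snd (gclosure kd pr F G)"
  shows "reduced kd pr F (first_rr kd pr F G es)"
  unfolding reduced_def
proof
  fix f assume f: "f \<in> snd (first_rr kd pr F G es)"
  then have "f \<in> set es" using first_rr_subgraph(2) assms by blast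
  have "f \<notin> snd (gclosure kd pr F (fst (gclosure kd pr F G), snd (first_rr kd pr F G es) - {f}))"
    using foldl_rr_step_reduced[OF \<open>f \<in> set es\<close>] f unfolding first_rr_def .
  then show "f \<notin> snd (gclosure kd pr F (fst (first_rr kd pr F G es), snd (first_rr kd pr F G es) - {f}))"
    unfolding first_rr_subgraph(1) .
qed

lemma rel_nodes_iff: "x \<in> rel_nodes E Ob \<longleftrightarrow> x = Ob \<or> (\<exists>M\<in>reach E Ob. (M, x) \<in> E)"
  unfolding rel_nodes_def outNbr_def by blast

lemma attr_node_rel_sort: "attr_node ` rel_sort kd E Ob = rel_nodes E Ob"
  unfolding rel_sort_def rel_nodes_def by (auto simp: image_Un image_image)

text \<open>Both \<open>SK Ob\<close> and \<open>Nm Ob\<close> may occur in the sort, and both denote \<open>Ob\<close>.\<close>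

lemma rel_sort_attr_node_inj:
  assumes "a \<in> rel_sort kd E Ob" and "a' \<in> rel_sort kd E Ob"
    and "attr_node a = attr_node a'" and "attr_node a \<noteq> Ob"
  shows "a = a'"
  using assms unfolding rel_sort_def by (auto split: if_splits)

lemma reach_fd_equivalent:
  assumes "N \<in> reach E Ob"
  shows "N \<in> fd_cl (graph_fds kd pr F (V, E)) {Ob}" and "Ob \<in> fd_cl (graph_fds kd pr F (V, E)) {N}"
proof -
  let ?cl = "fd_cl (graph_fds kd pr F (V, E))"
  from assms have "N \<in> ?cl {Ob} \<and> Ob \<in> ?cl {N}"
  proof (induction rule: reach.induct)
    case reach_self
    then show ?case by (simp add: fd_cl_base)
  next
    case (reach_bin M N)
    then have "(M, N) \<in> E" and "(N, M) \<in> E" by (simp_all add: bin_def)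
    have "N \<in> ?cl {Ob}"
      using graph_fds_arrow[OF \<open>(M, N) \<in> E\<close>] reach_bin.IH by blast
    moreover have "M \<in> ?cl {N}"
      using graph_fds_arrow[OF \<open>(N, M) \<in> E\<close>] fd_cl_base[of N "{N}"] by blast
    then have "Ob \<in> ?cl {N}"
      using fd_cl_trans[of "{M}"] reach_bin.IH by blast
    ultimately show ?case ..
  qed
  then show "N \<in> ?cl {Ob}" and "Ob \<in> ?cl {N}" by simp_all
qed

lemma rel_nodes_determined: "rel_nodes E Ob \<subseteq> fd_cl (graph_fds kd pr F (V, E)) {Ob}"
proof
  fix x assume "x \<in> rel_nodes E Ob"
  then consider "x = Ob" | M where "M \<in> reach E Ob" "(M, x) \<in> E"
    unfolding rel_nodes_iff by blast
  then show "x \<in> fd_cl (graph_fds kd pr F (V, E)) {Ob}"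
  proof cases
    case 2
    then show ?thesis using graph_fds_arrow reach_fd_equivalent(1) by metis
  qed (simp add: fd_cl_base)
qed

lemma reach_first_arrow:
  assumes "N \<in> reach E Ob" and "N \<noteq> Ob"
  shows "\<exists>N'\<in>reach E Ob. (Ob, N') \<in> E"
  using assms
proof (induction rule: reach.induct)
  case (reach_bin M N)
  show ?case
  proof (cases "M = Ob")
    case True
    then show ?thesis using reach_bin reach.reach_bin unfolding bin_def by blast
  qed (use reach_bin.IH in blast)
qed simp

lemma reach_out_arrow:
  assumes "M \<in> reach E Ob" and "x \<in> rel_nodes E Ob" and "x \<noteq> Ob"
  shows "\<exists>N\<in>insert x (reach E Ob). (M, N) \<in> E"
proof (cases "M = Ob")
  case True
  obtain M' where "M' \<in> reach E Ob" "(M', x) \<in> E"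
    using assms(2,3) unfolding rel_nodes_iff by blast
  then show ?thesis
    using reach_first_arrow[of M' E Ob] True by (cases "M' = Ob") auto
next
  case False
  with assms(1) obtain M0 where "M0 \<in> reach E Ob" "M \<in> bin E M0"
    by (cases rule: reach.cases) auto
  then show ?thesis unfolding bin_def by blast
qed

lemma reach_remove_arrow:
  assumes "b \<notin> reach E Ob"
  shows "reach E Ob \<subseteq> reach (E - {(M, b)}) Ob"
proof
  fix N assume "N \<in> reach E Ob"
  then show "N \<in> reach (E - {(M, b)}) Ob"
  proof (induction rule: reach.induct)
    case (reach_bin M' N)
    have "N \<in> reach E Ob" using reach_bin.hyps by (rule reach.reach_bin)
    with reach_bin.hyps assms have "N \<in> bin (E - {(M, b)}) M'"
      unfolding bin_def by auto
    with reach_bin.IH show ?case by (rule reach.reach_bin)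
  qed (rule reach_self)
qed

lemma rel_nodes_remove_arrow:
  assumes "b \<notin> reach E Ob"
  shows "rel_nodes E Ob - {b} \<subseteq> rel_nodes (E - {(M, b)}) Ob"
  using reach_remove_arrow[OF assms, of M] by (fastforce simp: rel_nodes_iff)

lemma map_rels_relations:
  "r \<in> set (map_rels kd E os P) \<Longrightarrow> \<exists>Ob. r = (Ob, reach E Ob, rel_sort kd E Ob)"
  by (induction os arbitrary: P) (auto split: if_splits)

lemma clean1_sorts:
  "S \<in> set (clean1 kd rs) \<Longrightarrow> \<exists>r\<in>set rs. S = snd (snd r) \<or> S = snd (snd r) - {SK (fst r)}"
  unfolding clean1_def by auto

lemma rel_schema_sorts:
  assumes "R \<in> set (rel_schema kd G ord)"
  obtains Ob where "rel_sort kd (snd G) Ob - {SK Ob} \<subseteq> R" and "R \<subseteq> rel_sort kd (snd G) Ob"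
proof -
  have "R \<in> set (clean1 kd (map_rels kd (snd G) ord {}))"
    using assms unfolding rel_schema_def clean2_def by auto
  then obtain r where "r \<in> set (map_rels kd (snd G) ord {})"
    and R: "R = snd (snd r) \<or> R = snd (snd r) - {SK (fst r)}"
    using clean1_sorts by blast
  then obtain Ob where "r = (Ob, reach (snd G) Ob, rel_sort kd (snd G) Ob)"
    using map_rels_relations by blast
  with R that show ?thesis by auto
qed

lemma reduced_arrow_underivable:
  assumes "reduced kd pr F (V, E)" and "(M, b) \<in> E" and "b \<in> V"
    and "(M, N) \<in> E" and "N \<noteq> b"
    and "X \<subseteq> fd_cl (graph_fds kd pr F (V, E - {(M, b)})) {M}"
    and "M \<notin> fd_cl (graph_fds kd pr F (V, E)) X"
  shows "b \<notin> fd_cl (graph_fds kd pr F (V, E)) X"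
proof
  let ?D = "graph_fds kd pr F (V, E)" and ?D' = "graph_fds kd pr F (V, E - {(M, b)})"
  assume "b \<in> fd_cl ?D X"
  also have "fd_cl ?D X \<subseteq> fd_cl (?D - {({M}, {b})}) X"
    using assms(7) by (intro fd_cl_remove_fd) simp
  also have "\<dots> \<subseteq> fd_cl ?D' X"
    using FDG_remove_arrow[of kd pr V E M b] by (intro fd_cl_mono) blast
  also have "\<dots> \<subseteq> fd_cl ?D' {M}"
    using assms(6) by (rule fd_cl_trans)
  finally have "(M, b) \<in> snd (gclosure kd pr F (V, E - {(M, b)}))"
    using assms(4,5) by (intro gclosure_derived_arrow[OF _ assms(3)]) auto
  then show False
    using assms(1,2) unfolding reduced_def by auto
qed

lemma reduced_rel_nodes_fd_derives_key:
  assumes "E \<subseteq> V \<times> V" and "reduced kd pr F (V, E)"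
    and "\<forall>(L, R)\<in>graph_fds kd pr F (V, E). L \<noteq> {}"
    and "X \<subseteq> rel_nodes E Ob" and "n \<in> rel_nodes E Ob" and "n \<notin> X"
    and "n \<in> fd_cl (graph_fds kd pr F (V, E)) X"
  shows "Ob \<in> fd_cl (graph_fds kd pr F (V, E)) X"
proof (rule ccontr)
  let ?D = "graph_fds kd pr F (V, E)"
  assume no_key: "Ob \<notin> fd_cl ?D X"
  have not_derived: "N \<notin> fd_cl ?D X" if "N \<in> reach E Ob" for N
  proof
    assume "N \<in> fd_cl ?D X"
    then have "fd_cl ?D {N} \<subseteq> fd_cl ?D X" by (intro fd_cl_trans) simp
    with reach_fd_equivalent(2)[OF that] no_key show False by blast
  qed
  have "n \<noteq> Ob" using assms(7) no_key by blast
  then obtain M where M: "M \<in> reach E Ob" "(M, n) \<in> E"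
    using assms(5) unfolding rel_nodes_iff by blast
  have n_unreached: "n \<notin> reach E Ob" using not_derived assms(7) by blast
  have "X \<subseteq> rel_nodes (E - {(M, n)}) Ob"
    using assms(4,6) rel_nodes_remove_arrow[OF n_unreached, of M] by blast
  also have "\<dots> \<subseteq> fd_cl (graph_fds kd pr F (V, E - {(M, n)})) {Ob}"
    by (rule rel_nodes_determined)
  also have "\<dots> \<subseteq> fd_cl (graph_fds kd pr F (V, E - {(M, n)})) {M}"
    using reach_fd_equivalent(2)[OF subsetD[OF reach_remove_arrow[OF n_unreached] M(1)]]
    by (intro fd_cl_trans) simp
  finally have X: "X \<subseteq> fd_cl (graph_fds kd pr F (V, E - {(M, n)})) {M}" .
  have "X \<noteq> {}"
  proof
    assume "X = {}"
    then show False using assms(7) fd_cl_empty[OF assms(3)] by simp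
  qed
  then obtain x where "x \<in> X" by blast
  then have "x \<noteq> Ob" and "x \<in> rel_nodes E Ob" and "x \<noteq> n"
    using no_key fd_cl_superset[of X ?D] assms(4,6) by auto
  \<comment> \<open>\<open>{M}\<close> remains a left-hand side once \<open>M \<rightarrow> n\<close> is deleted\<close>
  then obtain N where "(M, N) \<in> E" and "N \<noteq> n"
    using reach_out_arrow[OF M(1)] n_unreached by blast
  moreover have "n \<in> V" using assms(1) M(2) by blast
  ultimately have "n \<notin> fd_cl ?D X"
    using reduced_arrow_underivable[OF assms(2) M(2) _ _ _ X not_derived[OF M(1)]] by blast
  with assms(7) show False by contradiction
qed

lemma reduced_rel_sort_bcnf:
  assumes "E \<subseteq> V \<times> V" and "reduced kd pr F (V, E)"
    and "\<forall>(L, R)\<in>graph_fds kd pr F (V, E). L \<noteq> {}"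
    and "rel_sort kd E Ob - {SK Ob} \<subseteq> R" and "R \<subseteq> rel_sort kd E Ob"
  shows "bcnf (graph_fds kd pr F (V, E)) R"
  unfolding bcnf_def fd_holds_def
proof (intro allI impI)
  let ?cl = "fd_cl (graph_fds kd pr F (V, E))"
  fix A B
  assume "A \<subseteq> R" and "B \<subseteq> R" and "\<not> B \<subseteq> A" and AB: "attr_node ` B \<subseteq> ?cl (attr_node ` A)"
  have R_nodes: "attr_node ` R \<subseteq> rel_nodes E Ob"
    using image_mono[OF assms(5), of attr_node] unfolding attr_node_rel_sort .
  obtain b where "b \<in> B" "b \<notin> A" using \<open>\<not> B \<subseteq> A\<close> by blast
  then have b_derived: "attr_node b \<in> ?cl (attr_node ` A)" using AB by blast
  have "Ob \<in> ?cl (attr_node ` A)"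
  proof (cases "attr_node b = Ob")
    case True
    then show ?thesis using b_derived by simp
  next
    case False
    have "attr_node b \<notin> attr_node ` A"
    proof
      assume "attr_node b \<in> attr_node ` A"
      then obtain a where "a \<in> A" and "attr_node b = attr_node a" by blast
      then have "b = a"
        using rel_sort_attr_node_inj[OF _ _ _ False] \<open>b \<in> B\<close> \<open>A \<subseteq> R\<close> \<open>B \<subseteq> R\<close> assms(5)
        by blast
      with \<open>a \<in> A\<close> \<open>b \<notin> A\<close> show False by simp
    qed
    moreover have "attr_node ` A \<subseteq> rel_nodes E Ob" and "attr_node b \<in> rel_nodes E Ob"
      using R_nodes \<open>A \<subseteq> R\<close> \<open>b \<in> B\<close> \<open>B \<subseteq> R\<close> by blast+
    ultimately show ?thesis
      using reduced_rel_nodes_fd_derives_key[OF assms(1-3)] b_derived by blast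
  qed
  then have "?cl {Ob} \<subseteq> ?cl (attr_node ` A)" by (intro fd_cl_trans) simp
  with R_nodes rel_nodes_determined[of E Ob kd pr V F]
  show "attr_node ` R \<subseteq> ?cl (attr_node ` A)" by (rule subset_trans[OF subset_trans])
qed

lemma lhs_node_cases:
  assumes "L \<noteq> {}" and "L \<subseteq> Base ` V0"
  shows "lhs_node L \<in> Base ` V0 \<or> (\<exists>S. S \<noteq> {} \<and> lhs_node L = Comp S)"
  using assms unfolding lhs_node_def is_singleton_def by auto

lemma FDG_base_lhs:
  assumes "E0 \<subseteq> Base ` V0 \<times> Base ` V0"
    and "\<forall>r\<in>V0. kd r = Relationship \<longrightarrow> pr r \<noteq> {} \<and> pr r \<subseteq> V0"
    and "\<forall>(L, R)\<in>F. L \<noteq> {} \<and> L \<subseteq> Base ` V0"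
    and "L \<in> fst ` graph_fds kd pr F (Base ` V0, E0)"
  shows "L \<noteq> {} \<and> L \<subseteq> Base ` V0"
proof -
  obtain R where "(L, R) \<in> graph_fds kd pr F (Base ` V0, E0)" using assms(4) by force
  then consider "(L, R) \<in> F" | x y where "L = {x}" "(x, y) \<in> E0" | X where "L = {X}" "X \<in> Base ` V0"
    | a where "L = Base ` pr a" "a \<in> V0" "kd a = Relationship"
    unfolding FDG_def projs_def has_projs_def by auto
  then show ?thesis
  proof cases
    case 1
    then show ?thesis using assms(3) by blast
  next
    case (2 x y)
    then show ?thesis using assms(1) by blast
  next
    case (4 a)
    then show ?thesis using assms(2) by blast
  qed simp
qed

lemma gclosure_projs_nonempty:
  assumes "E0 \<subseteq> Base ` V0 \<times> Base ` V0"
    and "\<forall>r\<in>V0. kd r = Relationship \<longrightarrow> pr r \<noteq> {} \<and> pr r \<subseteq> V0"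
    and "\<forall>(L, R)\<in>F. L \<noteq> {} \<and> L \<subseteq> Base ` V0"
    and "X \<in> fst (gclosure kd pr F (Base ` V0, E0))" and "has_projs kd X"
  shows "projs pr X \<noteq> {}"
proof -
  from assms(4) consider "X \<in> Base ` V0"
    | L where "L \<in> fst ` graph_fds kd pr F (Base ` V0, E0)" and "X = lhs_node L"
    unfolding gclosure_nodes by auto
  then have "X \<in> Base ` V0 \<or> (\<exists>S. S \<noteq> {} \<and> X = Comp S)"
  proof cases
    case 2
    with lhs_node_cases[of L V0] FDG_base_lhs[OF assms(1-3) 2(1)] show ?thesis by simp
  qed simp
  then show ?thesis
    using assms(2,5) unfolding projs_def has_projs_def by auto
qed

lemma graph_fds_lhs_nonempty:
  assumes "\<forall>X\<in>V. has_projs kd X \<longrightarrow> projs pr X \<noteq> {}" and "\<forall>(L, R)\<in>F. L \<noteq> {}"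
  shows "\<forall>(L, R)\<in>graph_fds kd pr F (V, E). L \<noteq> {}"
  using assms unfolding FDG_def by auto

theorem theorem7p1:
  fixes kd :: "'a \<Rightarrow> kind" and pr :: "'a \<Rightarrow> 'a set"
    and V0 :: "'a set" and E0 :: "('a node \<times> 'a node) set"
    and F :: "'a fd set"
    and es :: "('a node \<times> 'a node) list" and ord :: "'a node list"
  assumes "finite V0"
    and "E0 \<subseteq> Base ` V0 \<times> Base ` V0"
    and "\<forall>r\<in>V0. kd r = Relationship \<longrightarrow>
           pr r \<noteq> {} \<and> pr r \<subseteq> V0 \<and> (\<forall>p\<in>pr r. (Base r, Base p) \<in> E0)"
    and "finite F"
    and "\<forall>(L, R)\<in>F. L \<noteq> {} \<and> L \<subseteq> Base ` V0 \<and> R \<subseteq> Base ` V0"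
    and "distinct es" and "set es = snd (gclosure kd pr F (Base ` V0, E0))"
    and "distinct ord" and "set ord = fst (first_rr kd pr F (Base ` V0, E0) es)"
  shows "\<forall>R \<in> set (rel_schema kd (first_rr kd pr F (Base ` V0, E0) es) ord).
           bcnf (FDG kd pr (first_rr kd pr F (Base ` V0, E0) es) \<union> F) R"
proof
  fix R assume R: "R \<in> set (rel_schema kd (first_rr kd pr F (Base ` V0, E0) es) ord)"
  let ?GC = "gclosure kd pr F (Base ` V0, E0)"
  obtain V E where G1: "first_rr kd pr F (Base ` V0, E0) es = (V, E)" by fastforce
  have projections: "\<forall>r\<in>V0. kd r = Relationship \<longrightarrow> pr r \<noteq> {} \<and> pr r \<subseteq> V0"
    and F_lhs: "\<forall>(L, R)\<in>F. L \<noteq> {} \<and> L \<subseteq> Base ` V0"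
    using assms(3,5) by auto
  have V: "V = fst ?GC" and "E \<subseteq> snd ?GC"
    using first_rr_subgraph[of kd pr F "(Base ` V0, E0)" es] G1 by simp_all
  moreover have "snd ?GC \<subseteq> fst ?GC \<times> fst ?GC"
    using assms(2) by (intro gclosure_arrows_closed) auto
  ultimately have "E \<subseteq> V \<times> V" by blast
  moreover have "reduced kd pr F (V, E)"
    using first_rr_reduced[OF assms(7)] G1 by simp
  moreover have "\<forall>(L, R)\<in>graph_fds kd pr F (V, E). L \<noteq> {}"
    using gclosure_projs_nonempty[OF assms(2) projections F_lhs] F_lhs unfolding V
    by (intro graph_fds_lhs_nonempty) auto
  moreover obtain Ob where "rel_sort kd E Ob - {SK Ob} \<subseteq> R" and "R \<subseteq> rel_sort kd E Ob"
    using R unfolding G1 by (rule rel_schema_sorts[where G = "(V, E)", unfolded snd_conv])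
  ultimately show "bcnf (FDG kd pr (first_rr kd pr F (Base ` V0, E0) es) \<union> F) R"
    unfolding G1 by (rule reduced_rel_sort_bcnf)
qed

end
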